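(* Let $n\ge1$ and $\alpha=\beta=1$. For every $\mathcal{C}\in\{\bullet,\circ\}^n$ and every $T\in\mathcal{T}_n$ with $R(T)=\mathcal{C}$, we have $$\sum_{\mathcal{C}'}W(\mathcal{C}\to\mathcal{C}')=|f^{-1}\{T\}|,$$ which is the number of last branching vertices of $T$. Consequently, $$|R^{-1}\{\mathcal{C}\}|\sum_{\mathcal{C}'}W(\mathcal{C}\to\mathcal{C}')=|(R\circ f)^{-1}\{\mathcal{C}\}|.$$
   Context: Open-boundary TASEP on $n$ sites: this is the continuous-time Markov chain on $\{\bullet,\circ\}^n$ (strings of length $n$, where $\bullet$ denotes a particle and $\circ$ a hole). Its transition rates are as follows, with $\mathcal{A},\mathcal{A}'$ arbitrary strings: - $W(\circ\mathcal{A}\to\bullet\mathcal{A})=\alpha$; - $W(\mathcal{A}\bullet\to\mathcal{A}\circ)=\beta$; - $W(\mathcal{A}\bullet\circ\mathcal{A}'\to\mathcal{A}\circ\bullet\mathcal{A}')=1$; - $W(\mathcal{C}\to\mathcal{C}')=0$ for all other pairs. A plane binary tree is a finite rooted tree in which every vertex is either an endpoint (a leaf, with no children) or has exactly two children, an ordered left child and right child. Every non-root vertex is thus either a left descendent or a right descendent of its parent. The endpoints are ordered from left to right in the planar order. $\mathcal{T}_n$ denotes the set of plane binary trees with exactly $n+2$ endpoints. The reduced configuration of $T\in\mathcal{T}_n$ is $R(T)=(t_1,\dots,t_n)\in\{\bullet,\circ\}^n$. Here $t_k=\bullet$ if the $(k+1)$-th endpoint from the left is a left child, and $t_k=\circ$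 if it is a right child. The leftmost and rightmost endpoints are ignored. A last branching vertex of a plane binary tree is a non-endpoint vertex both of whose children are endpoints. A marked tree is a pair $(T,v)$ with $T\in\mathcal{T}_n$ and $v$ a last branching vertex of $T$. The set of marked trees is $\widehat{\mathcal{T}}_n$. The map $f:\widehat{\mathcal{T}}_n\to\mathcal{T}_n$, $f(T,v)=T$, forgets the mark. *)

theory Defs
  imports Complex_Main
begin

text \<open>Configurations of the TASEP on n sites: lists of length n over bool,
  True = particle (bullet), False = hole (circ).\<close>

definition tasep_rate :: "real \<Rightarrow> real \<Rightarrow> bool list \<Rightarrow> bool list \<Rightarrow> real" where
  "tasep_rate \<alpha> \<beta> C C' =
     (if C \<noteq> [] \<and> \<not> hd C \<and> C' = C[0 := True] then \<alpha> else 0)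
   + (if C \<noteq> [] \<and> last C \<and> C' = C[length C - 1 := False] then \<beta> else 0)
   + (if \<exists>i. Suc i < length C \<and> C ! i \<and> \<not> C ! Suc i
              \<and> C' = C[i := False, Suc i := True] then 1 else 0)"

datatype ptree = Leaf | Node ptree ptree

fun num_leaves :: "ptree \<Rightarrow> nat" where
  "num_leaves Leaf = 1"
| "num_leaves (Node l r) = num_leaves l + num_leaves r"

text \<open>Sides of the endpoints from left to right; the argument is True iff the
  current vertex is a left child.  (Only used for the non-root case.)\<close>
fun leaf_sides :: "bool \<Rightarrow> ptree \<Rightarrow> bool list" where
  "leaf_sides s Leaf = [s]"
| "leaf_sides s (Node l r) = leaf_sides True l @ leaf_sides False r"

definition trees :: "nat \<Rightarrow> ptree set" where
  "trees n = {T. num_leaves T = n + 2}"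

text \<open>Reduced configuration: ignore the leftmost and rightmost endpoints.
  For a tree with at least two endpoints the root is not an endpoint.\<close>
fun reduced_config :: "ptree \<Rightarrow> bool list" where
  "reduced_config Leaf = []"
| "reduced_config (Node l r) =
     butlast (tl (leaf_sides True l @ leaf_sides False r))"

text \<open>Vertices are addressed by paths from the root (True = go to the left child).\<close>
fun subtree_at :: "ptree \<Rightarrow> bool list \<Rightarrow> ptree option" where
  "subtree_at T [] = Some T"
| "subtree_at Leaf (b # p) = None"
| "subtree_at (Node l r) (b # p) = subtree_at (if b then l else r) p"

definition last_branching :: "ptree \<Rightarrow> bool list set" where
  "last_branching T = {p. subtree_at T p = Some (Node Leaf Leaf)}"

definition marked_trees :: "nat \<Rightarrow> (ptree \<times> bool list) set" where
  "marked_trees n = {(T, v). T \<in> trees n \<and> v \<in> last_branching T}"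

definition forget_mark :: "ptree \<times> bool list \<Rightarrow> ptree" where
  "forget_mark Tv = fst Tv"

end

theory Submission
  imports Defs
begin

text \<open>Padding a configuration with a particle on the left and a hole on the right turns the
  two boundary moves into ordinary hops, so at \<open>\<alpha> = \<beta> = 1\<close> the total exit rate of \<open>C\<close> is the
  number of descents (a particle immediately followed by a hole) of \<open>True # C @ [False]\<close>.
  For a tree \<open>T\<close> with \<open>R(T) = C\<close> this padded word is exactly the word of sides of all
  endpoints of \<open>T\<close>. Two consecutive endpoints form a descent precisely when the first ends
  the left subtree and the second starts the right subtree of some vertex, and both are
  endpoints themselves, i.e. when that vertex is a last branching vertex.\<close>

fun descents :: "bool list \<Rightarrow> nat" where
  "descents (a # b # xs) = (if a \<and> \<not> b then 1 else 0) + descents (b # xs)"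
| "descents _ = 0"

lemma descents_eq_card:
  "descents xs = card {i. Suc i < length xs \<and> xs ! i \<and> \<not> xs ! Suc i}"
proof (induction xs rule: descents.induct)
  case (1 a b xs)
  let ?D = "{i. Suc i < length (b # xs) \<and> (b # xs) ! i \<and> \<not> (b # xs) ! Suc i}"
  have "{i. Suc i < length (a # b # xs) \<and> (a # b # xs) ! i \<and> \<not> (a # b # xs) ! Suc i}
      = (if a \<and> \<not> b then {0} else {}) \<union> Suc ` ?D"
  proof (rule set_eqI)
    fix i show "i \<in> {i. Suc i < length (a # b # xs) \<and> (a # b # xs) ! i \<and> \<not> (a # b # xs) ! Suc i}
        \<longleftrightarrow> i \<in> (if a \<and> \<not> b then {0} else {}) \<union> Suc ` ?D"
      by (cases i) auto
  qed
  moreover have "finite ?D"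
    by (rule finite_subset[of _ "{..<length (b # xs)}"]) auto
  ultimately show ?case
    using "1.IH" by (simp add: card_image)
qed simp_all

lemma descents_append:
  "descents (xs @ ys) =
     descents xs + descents ys + (if xs \<noteq> [] \<and> ys \<noteq> [] \<and> last xs \<and> \<not> hd ys then 1 else 0)"
proof (induction xs rule: descents.induct)
  case ("2_2" a)
  then show ?case by (cases ys) auto
qed simp_all

lemma card_hop_targets:
  "card {C'. \<exists>i. Suc i < length C \<and> C ! i \<and> \<not> C ! Suc i \<and> C' = C[i := False, Suc i := True]}
     = card {i. Suc i < length C \<and> C ! i \<and> \<not> C ! Suc i}"
proof -
  let ?hop = "\<lambda>i. C[i := False, Suc i := True]"
  let ?I = "{i. Suc i < length C \<and> C ! i \<and> \<not> C ! Suc i}"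
  have "inj_on ?hop ?I"
  proof (rule inj_onI, rule ccontr)
    fix i j assume i: "i \<in> ?I" and j: "j \<in> ?I" and "?hop i = ?hop j" and "i \<noteq> j"
    \<comment> \<open>site \<open>i\<close> is emptied by hop \<open>i\<close> but occupied after hop \<open>j\<close>\<close>
    have "\<not> ?hop i ! i" "?hop j ! i"
      using i j \<open>i \<noteq> j\<close> by (auto simp: nth_list_update)
    with \<open>?hop i = ?hop j\<close> show False by simp
  qed
  moreover have "{C'. \<exists>i. Suc i < length C \<and> C ! i \<and> \<not> C ! Suc i \<and> C' = ?hop i} = ?hop ` ?I"
    by auto
  ultimately show ?thesis
    by (simp add: card_image)
qed

lemma sum_tasep_rate:
  assumes "C \<noteq> []"
  shows "(\<Sum>C' \<in> {C'. length C' = length C}. tasep_rate \<alpha> \<beta> C C')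
           = (if hd C then 0 else \<alpha>) + (if last C then \<beta> else 0)
             + real (card {i. Suc i < length C \<and> C ! i \<and> \<not> C ! Suc i})"
proof -
  let ?S = "{C' :: bool list. length C' = length C}"
  let ?H = "{C'. \<exists>i. Suc i < length C \<and> C ! i \<and> \<not> C ! Suc i \<and> C' = C[i := False, Suc i := True]}"
  have fin: "finite ?S"
    using finite_lists_length_eq[of "UNIV :: bool set"] by simp
  have "?H \<subseteq> ?S"
    by auto
  then have hops: "(\<Sum>C' \<in> ?S. if C' \<in> ?H then 1 else 0) = real (card ?H)"
    using fin by (simp add: sum.If_cases Int_absorb1)
  have "(\<Sum>C' \<in> ?S. tasep_rate \<alpha> \<beta> C C')
      = (\<Sum>C' \<in> ?S. if \<not> hd C \<and> C' = C[0 := True] then \<alpha> else 0)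
        + (\<Sum>C' \<in> ?S. if last C \<and> C' = C[length C - 1 := False] then \<beta> else 0)
        + (\<Sum>C' \<in> ?S. if C' \<in> ?H then 1 else 0)"
    using assms unfolding tasep_rate_def by (simp add: sum.distrib)
  also have "\<dots> = (if hd C then 0 else \<alpha>) + (if last C then \<beta> else 0) + real (card ?H)"
    using fin hops assms by (cases "hd C"; cases "last C") simp_all
  finally show ?thesis
    by (simp add: card_hop_targets)
qed

corollary exit_rate_eq_descents:
  assumes "C \<noteq> []"
  shows "(\<Sum>C' \<in> {C'. length C' = length C}. tasep_rate 1 1 C C') = real (descents (True # C @ [False]))"
proof -
  have "descents (True # C @ [False]) = (if hd C then 0 else 1) + descents C + (if last C then 1 else 0)"
    using descents_append[of "[True]" "C @ [False]"] descents_append[of C "[False]"] assms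
    by simp
  then show ?thesis
    using sum_tasep_rate[OF assms, of 1 1] by (simp add: descents_eq_card)
qed

lemma leaf_sides_ne_Nil: "leaf_sides s T \<noteq> []"
  by (induction T arbitrary: s) auto

lemma hd_leaf_sides: "hd (leaf_sides s T) = (if T = Leaf then s else True)"
  by (induction T arbitrary: s) (auto simp: leaf_sides_ne_Nil)

lemma last_leaf_sides: "last (leaf_sides s T) = (if T = Leaf then s else False)"
  by (induction T arbitrary: s) (auto simp: leaf_sides_ne_Nil)

lemma leaf_sides_eq_padded_reduced_config:
  assumes "T \<noteq> Leaf"
  shows "leaf_sides True T = True # reduced_config T @ [False]"
proof -
  obtain l r where T: "T = Node l r"
    using assms by (cases T) auto
  have "leaf_sides True l = True # tl (leaf_sides True l)"
    using hd_leaf_sides[of True l] leaf_sides_ne_Nil by (metis list.collapse)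
  moreover have "leaf_sides False r = butlast (leaf_sides False r) @ [False]"
    using last_leaf_sides[of False r] leaf_sides_ne_Nil by (metis append_butlast_last_id)
  ultimately show ?thesis
    using T by (metis append_Cons append_assoc butlast_snoc leaf_sides.simps(2)
        list.sel(3) reduced_config.simps(2))
qed

lemma last_branching_Leaf: "last_branching Leaf = {}"
  unfolding last_branching_def by (auto elim: subtree_at.elims)

lemma last_branching_Node:
  "last_branching (Node l r) =
     (if l = Leaf \<and> r = Leaf then {[]} else {})
     \<union> Cons True ` last_branching l \<union> Cons False ` last_branching r"
proof (rule set_eqI)
  fix p
  show "p \<in> last_branching (Node l r) \<longleftrightarrow> p \<in> (if l = Leaf \<and> r = Leaf then {[]} else {})
          \<union> Cons True ` last_branching l \<union> Cons False ` last_branching r"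
    by (cases p) (auto simp: last_branching_def)
qed

lemma finite_last_branching: "finite (last_branching T)"
  by (induction T) (simp_all add: last_branching_Leaf last_branching_Node)

lemma card_last_branching_Node:
  "card (last_branching (Node l r)) =
     (if l = Leaf \<and> r = Leaf then 1 else 0) + card (last_branching l) + card (last_branching r)"
proof -
  let ?B = "Cons True ` last_branching l \<union> Cons False ` last_branching r"
  have "card ?B = card (last_branching l) + card (last_branching r)"
    by (subst card_Un_disjoint) (auto simp: finite_last_branching card_image)
  moreover have "finite ?B" "[] \<notin> ?B"
    by (auto simp: finite_last_branching)
  ultimately show ?thesis
    by (auto simp: last_branching_Node last_branching_Leaf)
qed

lemma descents_leaf_sides: "descents (leaf_sides s T) = card (last_branching T)"
proof (induction T arbitrary: s)
  case Leaf
  show ?case by (simp add: last_branching_Leaf)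
next
  case (Node l r)
  \<comment> \<open>the only new descent is at the junction of the two subtrees\<close>
  show ?case
    using Node.IH by (simp add: descents_append card_last_branching_Node leaf_sides_ne_Nil
        hd_leaf_sides last_leaf_sides)
qed

corollary exit_rate_reduced_config:
  assumes "T \<noteq> Leaf" and "reduced_config T \<noteq> []"
  shows "(\<Sum>C' \<in> {C'. length C' = length (reduced_config T)}. tasep_rate 1 1 (reduced_config T) C')
           = real (card (last_branching T))"
  using exit_rate_eq_descents[OF assms(2)] descents_leaf_sides[of True T]
    leaf_sides_eq_padded_reduced_config[OF assms(1)] by simp

lemma num_leaves_pos: "num_leaves T \<ge> 1"
  by (induction T) auto

lemma finite_num_leaves_le: "finite {T. num_leaves T \<le> k}"
proof (induction k)
  case 0
  have empty: "{T. num_leaves T \<le> 0} = {}"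
    using num_leaves_pos not_one_le_zero le_trans by blast
  show ?case
    unfolding empty by simp
next
  case (Suc k)
  let ?A = "{T. num_leaves T \<le> k}"
  have "{T. num_leaves T \<le> Suc k} \<subseteq> insert Leaf (case_prod Node ` (?A \<times> ?A))"
  proof
    fix T assume T: "T \<in> {T. num_leaves T \<le> Suc k}"
    show "T \<in> insert Leaf (case_prod Node ` (?A \<times> ?A))"
    proof (cases T)
      case (Node l r)
      then have "l \<in> ?A" "r \<in> ?A"
        using T num_leaves_pos[of l] num_leaves_pos[of r] by auto
      then show ?thesis
        using Node by auto
    qed simp
  qed
  then show ?case
    using Suc.IH finite_subset by blast
qed

lemma finite_trees: "finite (trees n)"
  unfolding trees_def by (rule finite_subset[OF _ finite_num_leaves_le[of "n + 2"]]) auto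

lemma fibre_forget_mark:
  assumes "T \<in> trees n"
  shows "{x \<in> marked_trees n. forget_mark x = T} = Pair T ` last_branching T"
  using assms by (auto simp: marked_trees_def forget_mark_def)

lemma marked_trees_over_config:
  "{x \<in> marked_trees n. reduced_config (forget_mark x) = C}
     = Sigma {T \<in> trees n. reduced_config T = C} last_branching"
  by (auto simp: marked_trees_def forget_mark_def)

theorem mainTheorem3:
  fixes n :: nat and C :: "bool list"
  assumes "n \<ge> 1" and "length C = n"
  shows "(\<forall>T \<in> trees n. reduced_config T = C \<longrightarrow>
            (\<Sum>C' \<in> {C'. length C' = n}. tasep_rate 1 1 C C')
              = real (card {x \<in> marked_trees n. forget_mark x = T})
          \<and> card {x \<in> marked_trees n. forget_mark x = T} = card (last_branching T))
       \<and> real (card {T \<in> trees n. reduced_config T = C})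
            * (\<Sum>C' \<in> {C'. length C' = n}. tasep_rate 1 1 C C')
          = real (card {x \<in> marked_trees n. reduced_config (forget_mark x) = C})"
proof -
  let ?rate = "\<Sum>C' \<in> {C'. length C' = n}. tasep_rate 1 1 C C'"
  have fibre: "card {x \<in> marked_trees n. forget_mark x = T} = card (last_branching T)"
    if "T \<in> trees n" for T
    using fibre_forget_mark[OF that] by (simp add: card_image inj_on_def)
  have rate: "?rate = real (card (last_branching T))"
    if "T \<in> trees n" and "reduced_config T = C" for T
  proof -
    have "T \<noteq> Leaf" "C \<noteq> []"
      using that(1) assms by (auto simp: trees_def)
    then show ?thesis
      using exit_rate_reduced_config[of T] that(2) assms(2) by simp
  qed
  have "real (card {x \<in> marked_trees n. reduced_config (forget_mark x) = C})
      = (\<Sum>T \<in> {T \<in> trees n. reduced_config T = C}. real (card (last_branching T)))"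
    by (simp add: marked_trees_over_config card_SigmaI finite_trees finite_last_branching)
  also have "\<dots> = (\<Sum>T \<in> {T \<in> trees n. reduced_config T = C}. ?rate)"
    using rate by (intro sum.cong) auto
  also have "\<dots> = real (card {T \<in> trees n. reduced_config T = C}) * ?rate"
    by simp
  finally show ?thesis
    using fibre rate by simp
qed

end
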